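(* Let $X=(V,E,T)$ be a $2$-dimensional $(k_0,k_1)$-regular $(\epsilon,\mu)$-cosystolic expander, and suppose $|V|$ is sufficiently large, i.e. $|V|\ge N$ for a threshold $N$ depending only on $\mu$. Then for any subset of edges $F\subseteq E$ and any vertex $v\in V$, $\mathrm{dist}(F_v, Z^1(X)\setminus B^1(X))\ge \frac{k_0}{2}$.
   Context: A $2$-dimensional simplicial complex $X=(V,E,T)$ consists of a finite vertex set $V$, a set $E$ of $2$-element subsets of $V$ and a set $T$ of $3$-element subsets of $V$ such that every $2$-element subset of a triangle lies in $E$. $X$ is $(k_0,k_1)$-regular if every vertex lies in exactly $k_0$ edges and every edge lies in exactly $k_1$ triangles. For $S\subseteq V$, $\delta(S)$ is the set of edges with exactly one endpoint in $S$; for $F\subseteq E$, $\delta(F)$ is the set of triangles containing an odd number of edges of $F$. $B^0(X)=\{\emptyset,V\}$, $Z^0(X)=\{S\subseteq V:\delta(S)=\emptyset\}$, $B^1(X)=\{\delta(S):S\subseteq V\}$, $Z^1(X)=\{F\subseteq E:\delta(F)=\emptyset\}$. $\mathrm{dist}(A,B)=|A\setminus B|+|B\setminus A|$; distance to a family is the minimum over its members. With $X(0)=V$, $X(1)=E$, $X$ is an $(\epsilon,\mu)$-cosystolic expander ($\epsilon,\mu>0$) if for $i\in\{0,1\}$ and all $S\subseteq X(i)$: if $|\delta(S)|=0$ then $S\in B^i(X)$ or $|S|\ge\mu|X(i)|$; otherwise $|\delta(S)|/\mathrm{dist}(S,Z^i(X))\ge\epsilon k_i$. The local view of $v$ with respect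 to $F$ is $F_v=\{e\in F: v\in e\}$. *)

theory Defs
  imports Complex_Main
begin

definition simplicial_complex2 :: "'a set \<Rightarrow> 'a set set \<Rightarrow> 'a set set \<Rightarrow> bool" where
  "simplicial_complex2 V E T \<longleftrightarrow>
     finite V \<and>
     (\<forall>e\<in>E. e \<subseteq> V \<and> card e = 2) \<and>
     (\<forall>t\<in>T. t \<subseteq> V \<and> card t = 3) \<and>
     (\<forall>t\<in>T. \<forall>e. e \<subseteq> t \<and> card e = 2 \<longrightarrow> e \<in> E)"

definition regular_complex :: "'a set \<Rightarrow> 'a set set \<Rightarrow> 'a set set \<Rightarrow> nat \<Rightarrow> nat \<Rightarrow> bool" where
  "regular_complex V E T k0 k1 \<longleftrightarrow>
     (\<forall>v\<in>V. card {e\<in>E. v \<in> e} = k0) \<and>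
     (\<forall>e\<in>E. card {t\<in>T. e \<subseteq> t} = k1)"

definition cob0 :: "'a set set \<Rightarrow> 'a set \<Rightarrow> 'a set set" where
  "cob0 E S = {e\<in>E. card (e \<inter> S) = 1}"

definition cob1 :: "'a set set \<Rightarrow> 'a set set \<Rightarrow> 'a set set" where
  "cob1 T F = {t\<in>T. odd (card {e\<in>F. e \<subseteq> t})}"

definition B0 :: "'a set \<Rightarrow> 'a set set" where
  "B0 V = {{}, V}"

definition Z0 :: "'a set \<Rightarrow> 'a set set \<Rightarrow> 'a set set" where
  "Z0 V E = {S. S \<subseteq> V \<and> cob0 E S = {}}"

definition B1 :: "'a set \<Rightarrow> 'a set set \<Rightarrow> 'a set set set" where
  "B1 V E = cob0 E ` Pow V"

definition Z1 :: "'a set set \<Rightarrow> 'a set set \<Rightarrow> 'a set set set" where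
  "Z1 E T = {F. F \<subseteq> E \<and> cob1 T F = {}}"

definition symdist :: "'b set \<Rightarrow> 'b set \<Rightarrow> nat" where
  "symdist A B = card (A - B) + card (B - A)"

definition dist_fam :: "'b set \<Rightarrow> 'b set set \<Rightarrow> nat" where
  "dist_fam A Fam = Min (symdist A ` Fam)"

definition cosystolic_expander ::
  "'a set \<Rightarrow> 'a set set \<Rightarrow> 'a set set \<Rightarrow> nat \<Rightarrow> nat \<Rightarrow> real \<Rightarrow> real \<Rightarrow> bool" where
  "cosystolic_expander V E T k0 k1 \<epsilon> \<mu> \<longleftrightarrow>
     \<epsilon> > 0 \<and> \<mu> > 0 \<and>
     (\<forall>S. S \<subseteq> V \<longrightarrow>
        (card (cob0 E S) = 0 \<longrightarrow> S \<in> B0 V \<or> real (card S) \<ge> \<mu> * real (card V)) \<and>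
        (card (cob0 E S) \<noteq> 0 \<longrightarrow>
           real (card (cob0 E S)) / real (dist_fam S (Z0 V E)) \<ge> \<epsilon> * real k0)) \<and>
     (\<forall>S. S \<subseteq> E \<longrightarrow>
        (card (cob1 T S) = 0 \<longrightarrow> S \<in> B1 V E \<or> real (card S) \<ge> \<mu> * real (card E)) \<and>
        (card (cob1 T S) \<noteq> 0 \<longrightarrow>
           real (card (cob1 T S)) / real (dist_fam S (Z1 E T)) \<ge> \<epsilon> * real k1))"

definition local_view :: "'a set set \<Rightarrow> 'a \<Rightarrow> 'a set set" where
  "local_view F v = {e\<in>F. v \<in> e}"

end

theory Submission
  imports Defs
begin

text \<open>A nontrivial 1-cocycle Z is large: cosystolic expansion gives
  |Z| \<ge> \<mu>|E| = \<mu>|V|k0/2 by the handshake identity, which is at least 3k0/2 once |V| \<ge> 3/\<mu>.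
  A local view F_v has at most k0 edges, so it differs from Z in at least
  |Z| - k0 \<ge> k0/2 edges.\<close>

lemma simplicial_complex2_finite_edges:
  assumes "simplicial_complex2 V E T"
  shows "finite E"
proof -
  have "E \<subseteq> Pow V" and "finite V"
    using assms by (auto simp: simplicial_complex2_def)
  then show ?thesis by (simp add: finite_subset)
qed

lemma regular_complex_handshake:
  assumes sc: "simplicial_complex2 V E T" and rg: "regular_complex V E T k0 k1"
  shows "2 * card E = card V * k0"
proof -
  have fV: "finite V" and EV: "\<forall>e\<in>E. e \<subseteq> V \<and> card e = 2"
    using sc by (simp_all add: simplicial_complex2_def)
  have fE: "finite E" using sc by (rule simplicial_complex2_finite_edges)
  have "card V * k0 = (\<Sum>v\<in>V. card {e\<in>E. v \<in> e})"
    using rg by (simp add: regular_complex_def)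
  also have "\<dots> = (\<Sum>v\<in>V. \<Sum>e\<in>E. if v \<in> e then 1 else 0)"
    using fE by (simp add: sum.If_cases Int_def conj_commute)
  also have "\<dots> = (\<Sum>e\<in>E. \<Sum>v\<in>V. if v \<in> e then 1 else 0)" by (rule sum.swap)
  also have "\<dots> = (\<Sum>e\<in>E. card (V \<inter> e))" using fV by (simp add: sum.If_cases)
  also have "\<dots> = (\<Sum>e\<in>E. 2)"
    by (rule sum.cong) (use EV in \<open>auto simp: Int_absorb1\<close>)
  finally show ?thesis by simp
qed

lemma card_local_view_le_degree:
  assumes sc: "simplicial_complex2 V E T" and rg: "regular_complex V E T k0 k1"
    and "F \<subseteq> E" and "v \<in> V"
  shows "card (local_view F v) \<le> k0"
proof -
  have "card (local_view F v) \<le> card {e\<in>E. v \<in> e}"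
    using \<open>F \<subseteq> E\<close> simplicial_complex2_finite_edges[OF sc]
    by (intro card_mono) (auto simp: local_view_def)
  also have "\<dots> = k0" using rg \<open>v \<in> V\<close> by (simp add: regular_complex_def)
  finally show ?thesis .
qed

lemma cosystolic_expander_nontrivial_cocycle_card:
  assumes "cosystolic_expander V E T k0 k1 \<epsilon> \<mu>" and "Z \<in> Z1 E T - B1 V E"
  shows "\<mu> * real (card E) \<le> real (card Z)"
  using assms unfolding cosystolic_expander_def Z1_def by auto

lemma card_le_symdist_plus_card:
  assumes "finite A"
  shows "card B \<le> symdist A B + card A"
proof -
  have "card B \<le> card ((B - A) \<union> A)"
    by (cases "finite B") (auto intro: card_mono simp: assms)
  also have "\<dots> \<le> card (B - A) + card A" by (rule card_Un_le)
  finally show ?thesis by (simp add: symdist_def)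
qed

theorem lemma3p6:
  fixes \<mu> :: real
  assumes "\<mu> > 0"
  shows "\<exists>N::nat. \<forall>(V::'a set) E T k0 k1 \<epsilon>.
           simplicial_complex2 V E T \<and> regular_complex V E T k0 k1 \<and>
           cosystolic_expander V E T k0 k1 \<epsilon> \<mu> \<and> card V \<ge> N \<longrightarrow>
           (\<forall>F v. F \<subseteq> E \<and> v \<in> V \<longrightarrow>
              (\<forall>Z\<in>Z1 E T - B1 V E. real (symdist (local_view F v) Z) \<ge> real k0 / 2))"
proof (intro exI[of _ "nat \<lceil>3 / \<mu>\<rceil>"] allI impI ballI, elim conjE)
  fix V :: "'a set" and E T k0 k1 \<epsilon> F v Z
  assume sc: "simplicial_complex2 V E T" and rg: "regular_complex V E T k0 k1"
    and ce: "cosystolic_expander V E T k0 k1 \<epsilon> \<mu>" and large: "nat \<lceil>3 / \<mu>\<rceil> \<le> card V"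
    and "F \<subseteq> E" and "v \<in> V" and Z: "Z \<in> Z1 E T - B1 V E"
  have "3 \<le> \<mu> * real (card V)"
    using large assms by (simp add: nat_le_iff ceiling_le_iff field_simps)
  then have "3 * real k0 / 2 \<le> \<mu> * real (card V) * real k0 / 2"
    by (simp add: mult_right_mono divide_right_mono)
  also have "\<dots> = \<mu> * real (card E)"
    using regular_complex_handshake[OF sc rg] by (simp add: field_simps flip: of_nat_mult)
  also have "\<dots> \<le> real (card Z)"
    using ce Z by (rule cosystolic_expander_nontrivial_cocycle_card)
  also have "\<dots> \<le> real (symdist (local_view F v) Z + card (local_view F v))"
    using simplicial_complex2_finite_edges[OF sc] \<open>F \<subseteq> E\<close>
    by (intro of_nat_mono card_le_symdist_plus_card)
      (auto simp: local_view_def intro: finite_subset)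
  also have "\<dots> \<le> real (symdist (local_view F v) Z) + real k0"
    using card_local_view_le_degree[OF sc rg \<open>F \<subseteq> E\<close> \<open>v \<in> V\<close>] by simp
  finally show "real k0 / 2 \<le> real (symdist (local_view F v) Z)" by linarith
qed

end
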